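(* In $TTR$: (1) If $A$ is a without-arrow type of kind 1 and $A\subseteq B$, then $B$ is a without-arrow type of kind 1 and $At(A)=At(B)$. (2) If $A$ is a without-arrow type of kind 2, then $A\subseteq B$ for every type $B$.
   Context: $TTR$ types: over a second-order language with first-order variables, function symbols, $n$-ary predicate variables and symbols, and a fixed system $\mathbf E$ of equations; atomic $\perp$ and $X(t_1,\dots,t_n)$; constructors $\to$, $\forall x$, $\forall X$, and $\mu Cx_1\dots x_nA\langle t_1,\dots,t_n\rangle$ for $C$ an $n$-ary predicate symbol occurring and positive in $A$ (bound in it). Subtyping $\subseteq$ is the least relation closed under: $A\subseteq A$; from $A\subseteq A'$, $B\subseteq B'$ infer $A'\to B\subseteq A\to B'$; from $A[G/v]\subseteq B$ infer $\forall vA\subseteq B$ ($G$ a term if $v$ first-order, a formula if $v$ a predicate variable); from $A\subseteq B$ infer $A\subseteq\forall vB$ if $v$ not free in $A$; from $A\subseteq B[v/y]$ infer $A\subseteq B[w/y]$ if $v=w$ is an instance of an equation of $\mathbf E$; transitivity; $D[\mu C\bar xD\langle\bar z\rangle/C(\bar z)][\bar t/\bar x]\subseteq\mu C\bar xD\langle\bar t\rangle$ and its converse; from $D[E/C(\bar x)]\subseteq E$ infer $\mu C\bar xD\langle\bar t\rangle\subseteq E[\bar t/\bar x]$. A without-arrow type is a type containing no arrow $\to$. Each without-arrow type $A$ contains a unique atomic formula $X(t_1,\dots,t_n)$, and $At(A)$ denotes this $X$. $A$ is of kind 1 if $At(A)$ is free in $A$, and of kind 2 if $At(A)$ is bound in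 $A$. *)

theory Defs
  imports Main
begin

text \<open>First-order terms: variables (nat names) and function symbols
  (name, arity) applied to argument lists.\<close>
datatype trm = TV nat | TF nat nat "trm list"

datatype pn = PVar nat nat | PSym nat nat

fun arity :: "pn \<Rightarrow> nat" where
  "arity (PVar X n) = n"
| "arity (PSym C n) = n"

text \<open>Types.  \<open>AllP X n A\<close> is \<open>\<forall>X A\<close> for the n-ary predicate variable \<open>PVar X n\<close>;
  \<open>Mu c n xs D ts\<close> is \<open>\<mu>C x1..xn D\<langle>t1..tn\<rangle>\<close> for the n-ary predicate symbol
  \<open>C = PSym c n\<close>, binding \<open>C\<close> and \<open>xs\<close> in \<open>D\<close>.\<close>
datatype ty = Bot | Atom pn "trm list" | Arr ty ty | AllV nat ty
  | AllP nat nat ty | Mu nat nat "nat list" ty "trm list"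

fun tvars :: "trm \<Rightarrow> nat set" where
  "tvars (TV x) = {x}"
| "tvars (TF f n ts) = \<Union> (tvars ` set ts)"

fun wf_tm :: "trm \<Rightarrow> bool" where
  "wf_tm (TV x) = True"
| "wf_tm (TF f n ts) = (length ts = n \<and> (\<forall>t\<in>set ts. wf_tm t))"

fun tsubst :: "(nat \<Rightarrow> trm) \<Rightarrow> trm \<Rightarrow> trm" where
  "tsubst \<sigma> (TV x) = \<sigma> x"
| "tsubst \<sigma> (TF f n ts) = TF f n (map (tsubst \<sigma>) ts)"

fun fv :: "ty \<Rightarrow> nat set" where
  "fv Bot = {}"
| "fv (Atom p ts) = \<Union> (tvars ` set ts)"
| "fv (Arr A B) = fv A \<union> fv B"
| "fv (AllV x A) = fv A - {x}"
| "fv (AllP X n A) = fv A"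
| "fv (Mu c n xs D ts) = (fv D - set xs) \<union> \<Union> (tvars ` set ts)"

fun fp :: "ty \<Rightarrow> pn set" where
  "fp Bot = {}"
| "fp (Atom p ts) = {p}"
| "fp (Arr A B) = fp A \<union> fp B"
| "fp (AllV x A) = fp A"
| "fp (AllP X n A) = fp A - {PVar X n}"
| "fp (Mu c n xs D ts) = fp D - {PSym c n}"

fun subst :: "(nat \<Rightarrow> trm) \<Rightarrow> ty \<Rightarrow> ty" where
  "subst \<sigma> Bot = Bot"
| "subst \<sigma> (Atom p ts) = Atom p (map (tsubst \<sigma>) ts)"
| "subst \<sigma> (Arr A B) = Arr (subst \<sigma> A) (subst \<sigma> B)"
| "subst \<sigma> (AllV x A) = AllV x (subst (\<sigma>(x := TV x)) A)"
| "subst \<sigma> (AllP X n A) = AllP X n (subst \<sigma> A)"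
| "subst \<sigma> (Mu c n xs D ts) =
     Mu c n xs (subst (\<lambda>z. if z \<in> set xs then TV z else \<sigma> z) D) (map (tsubst \<sigma>) ts)"

fun cfree :: "(nat \<Rightarrow> trm) \<Rightarrow> ty \<Rightarrow> bool" where
  "cfree \<sigma> Bot = True"
| "cfree \<sigma> (Atom p ts) = True"
| "cfree \<sigma> (Arr A B) = (cfree \<sigma> A \<and> cfree \<sigma> B)"
| "cfree \<sigma> (AllV x A) =
     (cfree (\<sigma>(x := TV x)) A \<and> (\<forall>z \<in> fv A - {x}. x \<notin> tvars (\<sigma> z)))"
| "cfree \<sigma> (AllP X n A) = cfree \<sigma> A"
| "cfree \<sigma> (Mu c n xs D ts) =
     (cfree (\<lambda>z. if z \<in> set xs then TV z else \<sigma> z) D \<and>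
      (\<forall>z \<in> fv D - set xs. set xs \<inter> tvars (\<sigma> z) = {}))"

definition inst :: "nat list \<Rightarrow> trm list \<Rightarrow> nat \<Rightarrow> trm" where
  "inst ys ts = (\<lambda>z. case map_of (zip ys ts) z of None \<Rightarrow> TV z | Some t \<Rightarrow> t)"

text \<open>Second-order substitution \<open>A[F/p(ys)]\<close>: every free occurrence \<open>p(ts)\<close>
  is replaced by \<open>F[ts/ys]\<close>.\<close>
fun psubst :: "pn \<Rightarrow> nat list \<Rightarrow> ty \<Rightarrow> ty \<Rightarrow> ty" where
  "psubst p ys F Bot = Bot"
| "psubst p ys F (Atom q ts) = (if q = p then subst (inst ys ts) F else Atom q ts)"
| "psubst p ys F (Arr A B) = Arr (psubst p ys F A) (psubst p ys F B)"
| "psubst p ys F (AllV x A) = AllV x (psubst p ys F A)"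
| "psubst p ys F (AllP X n A) =
     (if PVar X n = p then AllP X n A else AllP X n (psubst p ys F A))"
| "psubst p ys F (Mu c n xs D ts) =
     (if PSym c n = p then Mu c n xs D ts else Mu c n xs (psubst p ys F D) ts)"

text \<open>Capture-freeness of \<open>psubst p ys F\<close>; \<open>bv\<close>, \<open>bp\<close> collect the binders
  crossed so far.\<close>
fun pcfree :: "pn \<Rightarrow> nat list \<Rightarrow> ty \<Rightarrow> nat set \<Rightarrow> pn set \<Rightarrow> ty \<Rightarrow> bool" where
  "pcfree p ys F bv bp Bot = True"
| "pcfree p ys F bv bp (Atom q ts) =
     (q = p \<longrightarrow> (bv \<inter> (fv F - set ys) = {} \<and> bp \<inter> fp F = {} \<and> cfree (inst ys ts) F))"
| "pcfree p ys F bv bp (Arr A B) = (pcfree p ys F bv bp A \<and> pcfree p ys F bv bp B)"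
| "pcfree p ys F bv bp (AllV x A) = pcfree p ys F (insert x bv) bp A"
| "pcfree p ys F bv bp (AllP X n A) =
     (PVar X n = p \<or> pcfree p ys F bv (insert (PVar X n) bp) A)"
| "pcfree p ys F bv bp (Mu c n xs D ts) =
     (PSym c n = p \<or> pcfree p ys F (bv \<union> set xs) (insert (PSym c n) bp) D)"

fun pos :: "pn \<Rightarrow> ty \<Rightarrow> bool" and neg :: "pn \<Rightarrow> ty \<Rightarrow> bool" where
  "pos p Bot = True"
| "pos p (Atom q ts) = True"
| "pos p (Arr A B) = (neg p A \<and> pos p B)"
| "pos p (AllV x A) = pos p A"
| "pos p (AllP X n A) = (PVar X n = p \<or> pos p A)"
| "pos p (Mu c n xs D ts) = (PSym c n = p \<or> pos p D)"
| "neg p Bot = True"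
| "neg p (Atom q ts) = (q \<noteq> p)"
| "neg p (Arr A B) = (pos p A \<and> neg p B)"
| "neg p (AllV x A) = neg p A"
| "neg p (AllP X n A) = (PVar X n = p \<or> neg p A)"
| "neg p (Mu c n xs D ts) = (PSym c n = p \<or> neg p D)"

fun wf_ty :: "ty \<Rightarrow> bool" where
  "wf_ty Bot = True"
| "wf_ty (Atom p ts) = (length ts = arity p \<and> (\<forall>t\<in>set ts. wf_tm t))"
| "wf_ty (Arr A B) = (wf_ty A \<and> wf_ty B)"
| "wf_ty (AllV x A) = wf_ty A"
| "wf_ty (AllP X n A) = wf_ty A"
| "wf_ty (Mu c n xs D ts) =
     (length xs = n \<and> length ts = n \<and> distinct xs \<and> PSym c n \<in> fp D \<and>
      pos (PSym c n) D \<and> wf_ty D \<and> (\<forall>t\<in>set ts. wf_tm t))"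

inductive sub :: "(trm \<times> trm) set \<Rightarrow> ty \<Rightarrow> ty \<Rightarrow> bool" for E where
  refl: "wf_ty A \<Longrightarrow> sub E A A"
| arr: "sub E A A' \<Longrightarrow> sub E B B' \<Longrightarrow> sub E (Arr A' B) (Arr A B')"
| allV_l: "wf_ty (AllV x A) \<Longrightarrow> wf_tm t \<Longrightarrow> cfree (TV(x := t)) A \<Longrightarrow>
     sub E (subst (TV(x := t)) A) B \<Longrightarrow> sub E (AllV x A) B"
| allP_l: "wf_ty (AllP X n A) \<Longrightarrow> wf_ty F \<Longrightarrow> length ys = n \<Longrightarrow> distinct ys \<Longrightarrow>
     pcfree (PVar X n) ys F {} {} A \<Longrightarrow>
     sub E (psubst (PVar X n) ys F A) B \<Longrightarrow> sub E (AllP X n A) B"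
| allV_r: "sub E A B \<Longrightarrow> x \<notin> fv A \<Longrightarrow> sub E A (AllV x B)"
| allP_r: "sub E A B \<Longrightarrow> PVar X n \<notin> fp A \<Longrightarrow> sub E A (AllP X n B)"
| eqn: "sub E A (subst (TV(y := v)) B) \<Longrightarrow> (l, r) \<in> E \<Longrightarrow>
     v = tsubst \<sigma> l \<Longrightarrow> w = tsubst \<sigma> r \<Longrightarrow> wf_ty B \<Longrightarrow> wf_tm v \<Longrightarrow> wf_tm w \<Longrightarrow>
     cfree (TV(y := v)) B \<Longrightarrow> cfree (TV(y := w)) B \<Longrightarrow>
     sub E A (subst (TV(y := w)) B)"
| trans: "sub E A B \<Longrightarrow> sub E B C \<Longrightarrow> sub E A C"
| fold: "wf_ty (Mu c n xs D ts) \<Longrightarrow> distinct zs \<Longrightarrow> length zs = n \<Longrightarrow>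
     set zs \<inter> (fv D - set xs) = {} \<Longrightarrow>
     pcfree (PSym c n) zs (Mu c n xs D (map TV zs)) {} {} D \<Longrightarrow>
     cfree (inst xs ts) (psubst (PSym c n) zs (Mu c n xs D (map TV zs)) D) \<Longrightarrow>
     sub E (subst (inst xs ts) (psubst (PSym c n) zs (Mu c n xs D (map TV zs)) D))
           (Mu c n xs D ts)"
| unfold: "wf_ty (Mu c n xs D ts) \<Longrightarrow> distinct zs \<Longrightarrow> length zs = n \<Longrightarrow>
     set zs \<inter> (fv D - set xs) = {} \<Longrightarrow>
     pcfree (PSym c n) zs (Mu c n xs D (map TV zs)) {} {} D \<Longrightarrow>
     cfree (inst xs ts) (psubst (PSym c n) zs (Mu c n xs D (map TV zs)) D) \<Longrightarrow>
     sub E (Mu c n xs D ts)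
           (subst (inst xs ts) (psubst (PSym c n) zs (Mu c n xs D (map TV zs)) D))"
| ind: "wf_ty (Mu c n xs D ts) \<Longrightarrow> wf_ty F \<Longrightarrow> pcfree (PSym c n) xs F {} {} D \<Longrightarrow>
     sub E (psubst (PSym c n) xs F D) F \<Longrightarrow> cfree (inst xs ts) F \<Longrightarrow>
     sub E (Mu c n xs D ts) (subst (inst xs ts) F)"

fun noarrow :: "ty \<Rightarrow> bool" where
  "noarrow Bot = True"
| "noarrow (Atom p ts) = True"
| "noarrow (Arr A B) = False"
| "noarrow (AllV x A) = noarrow A"
| "noarrow (AllP X n A) = noarrow A"
| "noarrow (Mu c n xs D ts) = noarrow D"

text \<open>The predicate name of the (unique) atomic formula \<open>X(t\<^sub>1..t\<^sub>n)\<close> of a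
  without-arrow type (None if there is none, i.e. the atom is \<open>\<bottom>\<close>).\<close>
fun atm :: "ty \<Rightarrow> pn option" where
  "atm Bot = None"
| "atm (Atom p ts) = Some p"
| "atm (Arr A B) = None"
| "atm (AllV x A) = atm A"
| "atm (AllP X n A) = atm A"
| "atm (Mu c n xs D ts) = atm D"

definition At :: "ty \<Rightarrow> pn" where
  "At A = the (atm A)"

definition kind1 :: "ty \<Rightarrow> bool" where
  "kind1 A \<longleftrightarrow> noarrow A \<and> (\<exists>X. atm A = Some X \<and> X \<in> fp A)"

definition kind2 :: "ty \<Rightarrow> bool" where
  "kind2 A \<longleftrightarrow> noarrow A \<and> (\<exists>X. atm A = Some X \<and> X \<notin> fp A)"

end

theory Submission
  imports Defs
begin

text \<open>A without-arrow type has free predicate names only among its atom, so a binder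
  of a kind-1 type never binds anything: every rule of subtyping applied to a kind-1
  type either leaves its body unchanged or produces a closed type, which is not of
  kind 1.  Conversely, a kind-2 type has its atom bound by some \<open>\<forall>X\<close> or \<open>\<mu>C\<close>;
  instantiating that binder with \<open>\<forall>X.X\<close> (for \<open>\<forall>X\<close>) or using \<open>\<forall>X.X\<close> as the
  inductive invariant (for \<open>\<mu>C\<close>) shows the type is below \<open>\<forall>X.X\<close>, and \<open>\<forall>X.X\<close> is
  below every type.\<close>

lemma tsubst_TV [simp]: "tsubst TV t = t"
  by (induction t) (auto simp: map_idI)

lemma subst_TV [simp]: "subst TV A = A"
  by (induction A) (auto simp: map_idI)

lemma cfree_TV: "cfree TV A"
proof (induction A)
  case (Mu c n xs D ts)
  have "(\<lambda>z. if z \<in> set xs then TV z else TV z) = TV" by auto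
  with Mu show ?case by simp
qed auto

lemma fp_subst [simp]: "fp (subst \<sigma> A) = fp A"
  and atm_subst [simp]: "atm (subst \<sigma> A) = atm A"
  and noarrow_subst [simp]: "noarrow (subst \<sigma> A) = noarrow A"
  by (induction A arbitrary: \<sigma>) auto

lemma kind1_subst [simp]: "kind1 (subst \<sigma> A) = kind1 A"
  and At_subst [simp]: "At (subst \<sigma> A) = At A"
  by (auto simp: kind1_def At_def)

lemma psubst_fresh: "p \<notin> fp A \<Longrightarrow> psubst p ys F A = A"
  by (induction A) auto

lemma pcfree_fresh: "p \<notin> fp A \<Longrightarrow> pcfree p ys F bv bp A"
  by (induction A arbitrary: bv bp) auto

lemma fp_psubst: "fp (psubst p ys F A) \<subseteq> (fp A - {p}) \<union> fp F"
  by (induction A) auto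

lemma noarrow_psubstD: "noarrow (psubst p ys F A) \<Longrightarrow> noarrow A"
  by (induction A) (auto split: if_splits)

lemma fp_noarrow: "noarrow A \<Longrightarrow> fp A \<subseteq> set_option (atm A)"
  by (induction A) auto

lemma kind1_body_fresh:
  assumes "noarrow A" "atm A = Some Y" "Y \<in> fp A - {p}"
  shows "p \<notin> fp A"
  using fp_noarrow[OF assms(1)] assms(2,3) by auto

lemma sub_kind1: "sub E A B \<Longrightarrow> kind1 A \<Longrightarrow> kind1 B \<and> At A = At B"
proof (induction rule: sub.induct)
  case (allP_l X n A F ys B)
  then obtain Y where "noarrow A" "atm A = Some Y" "Y \<in> fp A - {PVar X n}"
    by (auto simp: kind1_def)
  then have "psubst (PVar X n) ys F A = A"
    by (intro psubst_fresh kind1_body_fresh)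
  with allP_l show ?case by (auto simp: kind1_def At_def)
next
  case (fold c n xs D ts zs)
  let ?F = "Mu c n xs D (map TV zs)"
  have fresh: "PSym c n \<notin> fp D"
  proof
    assume C: "PSym c n \<in> fp D"
    from fold.prems have "noarrow D"
      by (auto simp: kind1_def intro: noarrow_psubstD)
    with C have "fp D = {PSym c n}"
      using fp_noarrow[of D] by (cases "atm D") auto
    then have "fp (psubst (PSym c n) zs ?F D) = {}"
      using fp_psubst[of "PSym c n" zs ?F D] by auto
    with fold.prems show False by (simp add: kind1_def)
  qed
  then have "psubst (PSym c n) zs ?F D = D" by (rule psubst_fresh)
  with fold.prems fresh show ?case by (auto simp: kind1_def At_def)
next
  case (unfold c n xs D ts zs)
  then obtain Y where "noarrow D" "atm D = Some Y" "Y \<in> fp D - {PSym c n}"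
    by (auto simp: kind1_def)
  then have "psubst (PSym c n) zs (Mu c n xs D (map TV zs)) D = D"
    by (intro psubst_fresh kind1_body_fresh)
  with unfold.prems show ?case by (auto simp: kind1_def At_def)
next
  case (ind c n xs D ts F)
  then obtain Y where "noarrow D" "atm D = Some Y" "Y \<in> fp D - {PSym c n}"
    by (auto simp: kind1_def)
  moreover from calculation have "psubst (PSym c n) xs F D = D"
    by (intro psubst_fresh kind1_body_fresh)
  ultimately show ?case using ind by (auto simp: kind1_def At_def)
qed (auto simp: kind1_def At_def)

definition falsity :: ty where
  "falsity = AllP 0 0 (Atom (PVar 0 0) [])"

lemma falsity_simps [simp]:
  "subst \<sigma> falsity = falsity" "cfree \<sigma> falsity" "fv falsity = {}" "fp falsity = {}"
  "wf_ty falsity"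
  by (auto simp: falsity_def)

lemma pcfree_falsity: "pcfree p ys falsity bv bp A"
  by (induction A arbitrary: bv bp) auto

lemma falsity_sub: "wf_ty B \<Longrightarrow> sub E falsity B"
  unfolding falsity_def
  by (rule sub.allP_l[where F = B and ys = "[]"])
     (auto simp: inst_def cfree_TV intro: sub.refl)

lemma sub_AllV_left: "wf_ty (AllV x A) \<Longrightarrow> sub E A B \<Longrightarrow> sub E (AllV x A) B"
  by (rule sub.allV_l[where t = "TV x"]) (auto simp: cfree_TV)

lemma sub_AllP_left_fresh:
  "wf_ty (AllP X n A) \<Longrightarrow> PVar X n \<notin> fp A \<Longrightarrow> sub E A B \<Longrightarrow> sub E (AllP X n A) B"
  by (rule sub.allP_l[where F = Bot and ys = "[0..<n]"]) (auto simp: psubst_fresh pcfree_fresh)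

lemma fp_psubst_falsity_atm:
  "noarrow A \<Longrightarrow> atm A = Some Y \<Longrightarrow> fp (psubst Y ys falsity A) = {}"
  using fp_psubst[of Y ys falsity A] fp_noarrow[of A] by auto

text \<open>In a well-formed \<open>\<mu>C\<close> inside a without-arrow type, \<open>C\<close> must be the atom,
  so a free atom never sits under a \<open>\<mu>\<close>.\<close>

lemma wf_psubst_falsity: "wf_ty A \<Longrightarrow> noarrow A \<Longrightarrow> wf_ty (psubst p ys falsity A)"
proof (induction A)
  case (Mu c n xs D ts)
  have "p = PSym c n \<or> p \<notin> fp D"
    using Mu.prems fp_noarrow[of D] by (cases "atm D") auto
  then show ?case using Mu.prems by (auto simp: psubst_fresh)
qed auto

lemma psubst_atm_falsity_sub:
  assumes "wf_ty A" "noarrow A" "atm A = Some Y" "length ys = arity Y"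
  shows "sub E (psubst Y ys falsity A) falsity"
  using assms
proof (induction A arbitrary: ys)
  case (Atom p ts)
  then show ?case by (auto intro: sub.refl)
next
  case (AllV x A)
  then show ?case
    using wf_psubst_falsity[of A Y ys] by (auto intro: sub_AllV_left)
next
  case (AllP X n A)
  show ?case
  proof (cases "Y = PVar X n")
    case True
    with AllP have "sub E (psubst Y [0..<n] falsity A) falsity" by auto
    with True AllP.prems show ?thesis
      by (auto intro!: sub.allP_l[where F = falsity and ys = "[0..<n]"] simp: pcfree_falsity)
  next
    case False
    with AllP show ?thesis
      by (auto intro!: sub_AllP_left_fresh wf_psubst_falsity simp: fp_psubst_falsity_atm)
  qed
next
  case (Mu c n xs D ts)
  then have "Y = PSym c n"
    using fp_noarrow[of D] by auto
  with Mu have "sub E (Mu c n xs D ts) (subst (inst xs ts) falsity)"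
    by (intro sub.ind) (auto simp: pcfree_falsity)
  with \<open>Y = PSym c n\<close> show ?case by simp
qed auto

lemma kind2_sub: "wf_ty A \<Longrightarrow> kind2 A \<Longrightarrow> wf_ty B \<Longrightarrow> sub E A B"
proof -
  assume "wf_ty A" "kind2 A" "wf_ty B"
  then obtain Y where "noarrow A" "atm A = Some Y" "Y \<notin> fp A"
    by (auto simp: kind2_def)
  with \<open>wf_ty A\<close> have "sub E (psubst Y [0..<arity Y] falsity A) falsity"
    by (intro psubst_atm_falsity_sub) auto
  with \<open>Y \<notin> fp A\<close> have "sub E A falsity" by (simp add: psubst_fresh)
  then show "sub E A B" using falsity_sub[OF \<open>wf_ty B\<close>] by (rule sub.trans)
qed

theorem lemma4p4:
  fixes E :: "(trm \<times> trm) set"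
  shows "(\<forall>A B. wf_ty A \<longrightarrow> kind1 A \<longrightarrow> sub E A B \<longrightarrow> kind1 B \<and> At A = At B) \<and>
         (\<forall>A B. wf_ty A \<longrightarrow> kind2 A \<longrightarrow> wf_ty B \<longrightarrow> sub E A B)"
  using sub_kind1 kind2_sub by blast

end
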